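(* Let $d,N,m\ge1$ be integers and let $x_1,\dots,x_m$ be independent random variables uniformly distributed on $\Gamma_N^d$. Let $\mu_m=\frac1m\sum_{\nu=1}^m\delta_{x_\nu}$ and let $h\ge1$. Then the event $$\max_{u\in\Gamma_N^d\setminus\{0\}}|\widehat{\mu_m}(Nu)|\le\frac{4\log^{1/2}(8N^{d+h})}{m^{1/2}}$$ has probability at least $1-N^{-h}$.
   Context: $\Gamma_N=\{k/N:k=0,\dots,N-1\}\subset\mathbb T=\mathbb R/\mathbb Z$ and $\Gamma_N^d$ is its $d$-fold product. For $u\in\Gamma_N^d$, $\widehat{\mu_m}(Nu)=\frac1m\sum_{j=1}^m e^{-2\pi iN\langle u,x_j\rangle}$ (with $\mathbb T$ identified with $[0,1)$). *)

theory Defs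
  imports "HOL-Probability.Probability"
begin

text \<open>A point k/N of Gamma_N^d is represented by its integer numerator vector
  k : {0..<d} -> {0..<N} (extensional function, undefined outside {..<d}).\<close>
definition Gamma :: "nat \<Rightarrow> nat \<Rightarrow> (nat \<Rightarrow> nat) set" where
  "Gamma N d = PiE {..<d} (\<lambda>_. {..<N})"

definition coord :: "nat \<Rightarrow> (nat \<Rightarrow> nat) \<Rightarrow> nat \<Rightarrow> real" where
  "coord N k i = real (k i) / real N"

definition emp_fourier ::
  "nat \<Rightarrow> nat \<Rightarrow> nat \<Rightarrow> (nat \<Rightarrow> (nat \<Rightarrow> nat)) \<Rightarrow> (nat \<Rightarrow> nat) \<Rightarrow> complex" where
  "emp_fourier d N m xs u =
     (1 / of_nat m) * (\<Sum>j<m. cis (- 2 * pi * real N *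
         (\<Sum>i<d. coord N u i * coord N (xs j) i)))"

definition samples :: "nat \<Rightarrow> nat \<Rightarrow> nat \<Rightarrow> (nat \<Rightarrow> (nat \<Rightarrow> nat)) pmf" where
  "samples d N m = Pi_pmf {..<m} undefined (\<lambda>_. pmf_of_set (Gamma N d))"

end

theory Submission
  imports Defs
begin

text \<open>For a fixed nonzero frequency u the summands of the empirical Fourier coefficient are
  independent unit complex numbers with mean zero: their mean is a character sum over the grid,
  which factors into sums of nontrivial N-th roots of unity and so vanishes. Hoeffding's
  inequality applied to real and imaginary parts bounds the tail at level T by
  4 exp(-m T^2/4); a union bound over the fewer than N^d nonzero frequencies and the choice
  of T finish the proof.\<close>

lemma cis_sum: "finite A \<Longrightarrow> cis (sum f A) = (\<Prod>x\<in>A. cis (f x))"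
  by (induction A rule: finite_induct) (auto simp: cis_mult[symmetric])

lemma sum_cis_nontrivial_root_powers:
  fixes a N :: nat
  assumes "\<not> N dvd a"
  shows "(\<Sum>t<N. cis (2 * pi * real a * real t / real N)) = 0"
proof (cases "N = 0")
  case False
  define w where "w = cis (2 * pi * real a / real N)"
  have pow: "w ^ t = cis (2 * pi * real a * real t / real N)" for t
    unfolding w_def by (subst Complex.DeMoivre) (simp add: field_simps)
  have "w ^ N = 1"
    using False unfolding pow by (simp add: cis_multiple_2pi)
  moreover have "w \<noteq> 1"
  proof
    assume "w = 1"
    then obtain k :: int where "2 * pi * real a / real N = of_int k * 2 * pi"
      unfolding w_def by (auto simp: complex_eq_iff cos_one_2pi_int)
    hence "real a = real N * of_int k" using False by (simp add: field_simps)
    hence "int a = int N * k" by (metis of_int_eq_iff of_int_mult of_int_of_nat_eq)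
    hence "int N dvd int a" by simp
    with assms show False by simp
  qed
  ultimately show ?thesis by (simp add: geometric_sum pow[symmetric])
qed simp

lemma finite_Gamma: "finite (Gamma N d)"
  unfolding Gamma_def by (intro finite_PiE) auto

lemma Gamma_nonempty: "N > 0 \<Longrightarrow> Gamma N d \<noteq> {}"
  unfolding Gamma_def by (auto simp: PiE_eq_empty_iff lessThan_empty_iff)

lemma card_Gamma: "card (Gamma N d) = N ^ d"
  unfolding Gamma_def by (simp add: card_PiE)

definition grid_character :: "nat \<Rightarrow> nat \<Rightarrow> (nat \<Rightarrow> nat) \<Rightarrow> (nat \<Rightarrow> nat) \<Rightarrow> complex" where
  "grid_character d N u k = cis (- 2 * pi * real N * (\<Sum>i<d. coord N u i * coord N k i))"

lemma emp_fourier_eq: "emp_fourier d N m xs u = (\<Sum>j<m. grid_character d N u (xs j)) / of_nat m"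
  unfolding emp_fourier_def grid_character_def by simp

lemma norm_grid_character [simp]: "cmod (grid_character d N u k) = 1"
  by (simp add: grid_character_def)

lemma grid_character_eq_prod:
  assumes "N > 0"
  shows "grid_character d N u k = (\<Prod>i<d. cnj (cis (2 * pi * real (u i) * real (k i) / real N)))"
proof -
  have "- 2 * pi * real N * (\<Sum>i<d. coord N u i * coord N k i)
      = (\<Sum>i<d. - (2 * pi * real (u i) * real (k i) / real N))"
    unfolding coord_def sum_distrib_left
    by (intro sum.cong refl) (use assms in \<open>simp add: field_simps power2_eq_square\<close>)
  thus ?thesis by (simp add: grid_character_def cis_sum cis_cnj)
qed

lemma sum_grid_character:
  assumes u: "u \<in> Gamma N d" and i: "i < d" "u i \<noteq> 0"
  shows "(\<Sum>k\<in>Gamma N d. grid_character d N u k) = 0"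
proof -
  have ui: "u i < N" using u i by (auto simp: Gamma_def PiE_iff)
  have "(\<Sum>k\<in>Gamma N d. grid_character d N u k)
      = (\<Sum>k\<in>Gamma N d. \<Prod>j<d. cnj (cis (2 * pi * real (u j) * real (k j) / real N)))"
    using ui by (simp add: grid_character_eq_prod)
  also have "\<dots> = (\<Prod>j<d. \<Sum>t<N. cnj (cis (2 * pi * real (u j) * real t / real N)))"
    unfolding Gamma_def by (rule prod_sum_PiE[symmetric]) auto
  also have "\<dots> = 0"
  proof (intro prod_zero bexI)
    have "\<not> N dvd u i" using ui i by (auto dest: dvd_imp_le)
    thus "(\<Sum>t<N. cnj (cis (2 * pi * real (u i) * real t / real N))) = 0"
      by (simp flip: cnj_sum add: sum_cis_nontrivial_root_powers)
  qed (use i in auto)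
  finally show ?thesis .
qed

lemma Pi_pmf_prob_abs_sum_ge:
  fixes g :: "'a \<Rightarrow> real"
  assumes I: "finite I" "I \<noteq> {}" and bounded: "\<And>x. \<bar>g x\<bar> \<le> 1"
    and mean: "measure_pmf.expectation p g = 0" and \<epsilon>: "\<epsilon> \<ge> 0"
  shows "measure_pmf.prob (Pi_pmf I dflt (\<lambda>_. p)) {xs. \<epsilon> \<le> \<bar>\<Sum>i\<in>I. g (xs i)\<bar>}
           \<le> 2 * exp (- \<epsilon>\<^sup>2 / (2 * real (card I)))"
proof -
  let ?M = "Pi_pmf I dflt (\<lambda>_. p)"
  have mean_i: "measure_pmf.expectation ?M (\<lambda>xs. g (xs i)) = 0" if "i \<in> I" for i
  proof -
    have "measure_pmf.expectation ?M (\<lambda>xs. g (xs i))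
        = measure_pmf.expectation (map_pmf (\<lambda>xs. xs i) ?M) g"
      by (simp add: integral_map_pmf)
    also have "map_pmf (\<lambda>xs. xs i) ?M = p"
      using I that by (subst Pi_pmf_component) auto
    finally show ?thesis using mean by simp
  qed
  interpret Hoeffding_ineq ?M I "\<lambda>i xs. g (xs i)" "\<lambda>_. -1" "\<lambda>_. 1" 0
  proof unfold_locales
    show "prob_space.indep_vars ?M (\<lambda>_. borel) (\<lambda>i xs. g (xs i)) I"
      by (intro prob_space.indep_vars_compose2[OF _ indep_vars_Pi_pmf])
         (auto simp: measure_pmf.prob_space_axioms I)
    show "0 \<equiv> \<Sum>i\<in>I. measure_pmf.expectation ?M (\<lambda>xs. g (xs i))"
      using mean_i by simp
  qed (use bounded I in \<open>auto simp: abs_le_iff\<close>)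
  have "measure_pmf.prob ?M {xs \<in> space ?M. \<epsilon> \<le> \<bar>(\<Sum>i\<in>I. g (xs i)) - 0\<bar>}
     \<le> 2 * exp (-2 * \<epsilon>\<^sup>2 / (\<Sum>i\<in>I. (1 - -1)\<^sup>2))"
    by (rule Hoeffding_ineq_abs_ge[OF \<epsilon>]) (use I in \<open>simp add: card_gt_0_iff\<close>)
  also have "-2 * \<epsilon>\<^sup>2 / (\<Sum>i\<in>I. (1 - -1 :: real)\<^sup>2) = - \<epsilon>\<^sup>2 / (2 * real (card I))"
    by (simp add: field_simps)
  finally show ?thesis by simp
qed

lemma Pi_pmf_prob_norm_sum_gt:
  fixes f :: "'a \<Rightarrow> complex"
  assumes I: "finite I" "I \<noteq> {}" and bounded: "\<And>x. cmod (f x) \<le> 1"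
    and mean: "measure_pmf.expectation p f = 0" and T: "T \<ge> 0"
  shows "measure_pmf.prob (Pi_pmf I dflt (\<lambda>_. p)) {xs. real (card I) * T < cmod (\<Sum>i\<in>I. f (xs i))}
           \<le> 4 * exp (- (real (card I) * T\<^sup>2 / 4))"
proof -
  let ?M = "Pi_pmf I dflt (\<lambda>_. p)" and ?n = "real (card I)"
  define \<epsilon> where "\<epsilon> = ?n * T / sqrt 2"
  have \<epsilon>: "\<epsilon> \<ge> 0" "\<epsilon>\<^sup>2 = (?n * T)\<^sup>2 / 2"
    using T by (simp_all add: \<epsilon>_def power_divide)
  have integrable: "integrable (measure_pmf p) f"
    using bounded by (intro measure_pmf.integrable_const_bound[where B = 1]) auto
  define A where "A g = {xs. \<epsilon> \<le> \<bar>\<Sum>i\<in>I. g (f (xs i))\<bar>}" for g :: "complex \<Rightarrow> real"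
  have tail: "measure_pmf.prob ?M (A g) \<le> 2 * exp (- \<epsilon>\<^sup>2 / (2 * ?n))"
    if "g = Re \<or> g = Im" for g
    unfolding A_def
  proof (rule Pi_pmf_prob_abs_sum_ge[OF I _ _ \<epsilon>(1)])
    show "\<bar>g (f x)\<bar> \<le> 1" for x
      using that bounded[of x] abs_Re_le_cmod[of "f x"] abs_Im_le_cmod[of "f x"] by auto
    show "measure_pmf.expectation p (\<lambda>x. g (f x)) = 0"
      using that mean integrable by auto
  qed
  have "{xs. ?n * T < cmod (\<Sum>i\<in>I. f (xs i))} \<subseteq> A Re \<union> A Im"
  proof
    fix xs
    let ?S = "\<Sum>i\<in>I. f (xs i)"
    assume "xs \<in> {xs. ?n * T < cmod (\<Sum>i\<in>I. f (xs i))}"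
    hence "(?n * T)\<^sup>2 < (cmod ?S)\<^sup>2"
      using T by (intro power_strict_mono) auto
    hence "2 * \<epsilon>\<^sup>2 < (Re ?S)\<^sup>2 + (Im ?S)\<^sup>2"
      unfolding cmod_power2 \<epsilon>(2) by simp
    hence "\<epsilon>\<^sup>2 \<le> (Re ?S)\<^sup>2 \<or> \<epsilon>\<^sup>2 \<le> (Im ?S)\<^sup>2" by linarith
    hence "\<epsilon> \<le> \<bar>Re ?S\<bar> \<or> \<epsilon> \<le> \<bar>Im ?S\<bar>"
      using \<epsilon>(1) by (metis abs_le_square_iff abs_of_nonneg)
    thus "xs \<in> A Re \<union> A Im" by (auto simp: A_def Re_sum Im_sum)
  qed
  hence "measure_pmf.prob ?M {xs. ?n * T < cmod (\<Sum>i\<in>I. f (xs i))}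
      \<le> measure_pmf.prob ?M (A Re \<union> A Im)"
    by (rule measure_pmf.finite_measure_mono) simp
  also have "\<dots> \<le> measure_pmf.prob ?M (A Re) + measure_pmf.prob ?M (A Im)"
    by (rule measure_Un_le) simp_all
  also have "\<dots> \<le> 4 * exp (- \<epsilon>\<^sup>2 / (2 * ?n))"
    using tail[of Re] tail[of Im] by simp
  also have "- \<epsilon>\<^sup>2 / (2 * ?n) = - (?n * T\<^sup>2 / 4)"
    using I unfolding \<epsilon>(2) by (simp add: field_simps power2_eq_square card_gt_0_iff)
  finally show ?thesis .
qed

lemma prob_emp_fourier_gt:
  assumes N: "N \<ge> 1" and m: "m \<ge> 1" and u: "u \<in> Gamma N d" "i < d" "u i \<noteq> 0"
    and T: "T \<ge> 0"
  shows "measure_pmf.prob (samples d N m) {xs. T < cmod (emp_fourier d N m xs u)}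
           \<le> 4 * exp (- (real m * T\<^sup>2 / 4))"
proof -
  have mean: "measure_pmf.expectation (pmf_of_set (Gamma N d)) (grid_character d N u) = 0"
  proof (subst integral_measure_pmf[OF finite_Gamma])
    have "Gamma N d \<noteq> {}" using N by (simp add: Gamma_nonempty)
    thus "(\<Sum>k\<in>Gamma N d. pmf (pmf_of_set (Gamma N d)) k *\<^sub>R grid_character d N u k) = 0"
      by (simp add: finite_Gamma sum_grid_character[OF u] flip: scaleR_sum_right)
  qed (use N in \<open>auto simp: Gamma_nonempty finite_Gamma\<close>)
  have "{xs. T < cmod (emp_fourier d N m xs u)}
      = {xs. real (card {..<m}) * T < cmod (\<Sum>j\<in>{..<m}. grid_character d N u (xs j))}"
    using m by (auto simp: emp_fourier_eq norm_divide field_simps)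
  also have "measure_pmf.prob (samples d N m) \<dots> \<le> 4 * exp (- (real (card {..<m}) * T\<^sup>2 / 4))"
    unfolding samples_def using m by (intro Pi_pmf_prob_norm_sum_gt mean T) (auto simp: lessThan_empty_iff)
  finally show ?thesis by simp
qed

lemma measure_pmf_prob_Ball_ge:
  assumes "finite U" and bad: "\<And>u. u \<in> U \<Longrightarrow> measure_pmf.prob M {x. \<not> P u x} \<le> \<delta>"
  shows "1 - real (card U) * \<delta> \<le> measure_pmf.prob M {x. \<forall>u\<in>U. P u x}"
proof -
  have "measure_pmf.prob M (\<Union>u\<in>U. {x. \<not> P u x}) \<le> (\<Sum>u\<in>U. measure_pmf.prob M {x. \<not> P u x})"
    by (rule measure_pmf.finite_measure_subadditive_finite) (use assms in auto)
  also have "\<dots> \<le> real (card U) * \<delta>"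
    using bad by (simp add: sum_bounded_above)
  finally have "1 - real (card U) * \<delta> \<le> 1 - measure_pmf.prob M (\<Union>u\<in>U. {x. \<not> P u x})"
    by simp
  also have "\<dots> = measure_pmf.prob M (UNIV - (\<Union>u\<in>U. {x. \<not> P u x}))"
    using measure_pmf.prob_compl[of "\<Union>u\<in>U. {x. \<not> P u x}" M] by simp
  also have "UNIV - (\<Union>u\<in>U. {x. \<not> P u x}) = {x. \<forall>u\<in>U. P u x}" by auto
  finally show ?thesis .
qed

lemma exp_tail_at_log_threshold:
  fixes P m :: real
  assumes "P \<ge> 1" "m > 0"
  shows "4 * exp (- (m * (4 * sqrt (ln (8 * P)) / sqrt m)\<^sup>2 / 4)) \<le> 1 / (2 * P)"
proof -
  have L: "ln (8 * P) \<ge> 0" using assms by simp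
  have "m * (4 * sqrt (ln (8 * P)) / sqrt m)\<^sup>2 / 4 = 4 * ln (8 * P)"
    using assms L by (simp add: power_divide power_mult_distrib)
  hence "4 * exp (- (m * (4 * sqrt (ln (8 * P)) / sqrt m)\<^sup>2 / 4)) \<le> 4 * exp (- ln (8 * P))"
    using L by simp
  also have "\<dots> = 1 / (2 * P)" using assms by (simp add: exp_minus inverse_eq_divide)
  finally show ?thesis .
qed

lemma prob_all_emp_fourier_le:
  assumes N: "N \<ge> 1" and m: "m \<ge> 1" and T: "T \<ge> 0"
  shows "1 - real N ^ d * (4 * exp (- (real m * T\<^sup>2 / 4)))
           \<le> measure_pmf.prob (samples d N m)
                {xs. \<forall>u \<in> Gamma N d. (\<exists>i<d. u i \<noteq> 0) \<longrightarrow> cmod (emp_fourier d N m xs u) \<le> T}"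
proof -
  let ?U = "{u \<in> Gamma N d. \<exists>i<d. u i \<noteq> 0}" and ?\<delta> = "4 * exp (- (real m * T\<^sup>2 / 4))"
  have sets: "{xs. \<forall>u \<in> Gamma N d. (\<exists>i<d. u i \<noteq> 0) \<longrightarrow> cmod (emp_fourier d N m xs u) \<le> T}
      = {xs. \<forall>u\<in>?U. cmod (emp_fourier d N m xs u) \<le> T}"
    by blast
  have "card ?U \<le> N ^ d"
    unfolding card_Gamma[symmetric] by (intro card_mono finite_Gamma) auto
  hence "real (card ?U) * ?\<delta> \<le> real N ^ d * ?\<delta>"
    by (intro mult_right_mono) (simp_all flip: of_nat_power)
  moreover have "1 - real (card ?U) * ?\<delta>
      \<le> measure_pmf.prob (samples d N m) {xs. \<forall>u\<in>?U. cmod (emp_fourier d N m xs u) \<le> T}"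
    using prob_emp_fourier_gt[OF N m _ _ _ T]
    by (intro measure_pmf_prob_Ball_ge) (auto simp: finite_Gamma not_le)
  ultimately show ?thesis unfolding sets by linarith
qed

lemma frequency_count_times_tail_le:
  fixes N m d :: nat and h :: real
  assumes "N \<ge> 1" "m \<ge> 1" "h \<ge> 0"
  shows "real N ^ d
           * (4 * exp (- (real m * (4 * sqrt (ln (8 * real N powr (real d + h))) / sqrt (real m))\<^sup>2 / 4)))
         \<le> real N powr (- h)"
proof -
  define P where "P = real N powr (real d + h)"
  have P: "P \<ge> 1" unfolding P_def using assms by (simp add: ge_one_powr_ge_zero)
  have "real N ^ d * (4 * exp (- (real m * (4 * sqrt (ln (8 * P)) / sqrt (real m))\<^sup>2 / 4)))
      \<le> real N ^ d * (1 / (2 * P))"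
    using assms P by (intro mult_left_mono exp_tail_at_log_threshold) auto
  also have "\<dots> \<le> real N ^ d / P" using P by (simp add: field_simps)
  also have "\<dots> = real N powr (- h)"
    using assms unfolding P_def by (simp add: powr_realpow[symmetric] powr_add powr_minus divide_simps)
  finally show ?thesis unfolding P_def .
qed

theorem lemma3p1:
  fixes d N m :: nat and h :: real
  assumes "d \<ge> 1" "N \<ge> 1" "m \<ge> 1" "h \<ge> 1"
  shows "measure_pmf.prob (samples d N m)
           {xs. \<forall>u \<in> Gamma N d. (\<exists>i<d. u i \<noteq> 0) \<longrightarrow>
                  cmod (emp_fourier d N m xs u)
                    \<le> 4 * sqrt (ln (8 * real N powr (real d + h))) / sqrt (real m)}
         \<ge> 1 - real N powr (- h)"
proof -
  define T where "T = 4 * sqrt (ln (8 * real N powr (real d + h))) / sqrt (real m)"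
  have "real N powr (real d + h) \<ge> 1"
    using assms by (intro ge_one_powr_ge_zero) auto
  hence "T \<ge> 0" unfolding T_def by simp
  hence "1 - real N ^ d * (4 * exp (- (real m * T\<^sup>2 / 4)))
      \<le> measure_pmf.prob (samples d N m)
           {xs. \<forall>u \<in> Gamma N d. (\<exists>i<d. u i \<noteq> 0) \<longrightarrow> cmod (emp_fourier d N m xs u) \<le> T}"
    using assms by (intro prob_all_emp_fourier_le) auto
  moreover have "real N ^ d * (4 * exp (- (real m * T\<^sup>2 / 4))) \<le> real N powr (- h)"
    unfolding T_def using assms by (intro frequency_count_times_tail_le) auto
  ultimately show ?thesis unfolding T_def by linarith
qed

end
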